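(* Let $T$ be a positive integer and $\epsilon = T^{-1/3}$. Consider the forecaster that sets $S_0 = 0$ and, for $t = 1,\ldots,T$, predicts $p_t = 1/2 + \epsilon\cdot\mathrm{sgn}(S_{t-1})$, observes $x_t$, and sets $S_t = S_{t-1} + (x_t - p_t)$. If $x_1,\ldots,x_T$ are independent $\mathrm{Bernoulli}(1/2)$ bits, then $\mathbb{E}[\mathsf{CalDist}(x,p)] \le C\,T^{1/3}$ for a universal constant $C$.
   Context: $\mathrm{sgn}(0) = 0$, $\mathrm{sgn}(y)=1$ for $y>0$, $\mathrm{sgn}(y)=-1$ for $y<0$. For $x \in \{0,1\}^T$, let $\mathcal{C}(x) = \{q \in [0,1]^T : \sum_{t=1}^T (x_t - q_t)\mathbf{1}[q_t = \alpha] = 0 \text{ for all } \alpha \in [0,1]\}$ and $\mathsf{CalDist}(x,p) = \min_{q \in \mathcal{C}(x)} \|p-q\|_1$. *)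

theory Defs
  imports Complex_Main "HOL-Library.FuncSet"
begin

definition bits :: "nat \<Rightarrow> (nat \<Rightarrow> real) set" where
  "bits T = ({1..T} \<rightarrow>\<^sub>E {0, 1})"

definition calib_set :: "nat \<Rightarrow> (nat \<Rightarrow> real) \<Rightarrow> (nat \<Rightarrow> real) set" where
  "calib_set T x = {q \<in> {1..T} \<rightarrow>\<^sub>E {0..1}.
      \<forall>\<alpha>\<in>{0..1::real}. (\<Sum>t\<in>{1..T}. (x t - q t) * (if q t = \<alpha> then 1 else 0)) = 0}"

text \<open>CalDist(x,p) = min over q in C(x) of the l1 distance (the minimum is attained;
  we write it as the infimum, which coincides with it).\<close>
definition CalDist :: "nat \<Rightarrow> (nat \<Rightarrow> real) \<Rightarrow> (nat \<Rightarrow> real) \<Rightarrow> real" where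
  "CalDist T x p = (INF q\<in>calib_set T x. \<Sum>t\<in>{1..T}. \<bar>p t - q t\<bar>)"

fun S_run :: "real \<Rightarrow> (nat \<Rightarrow> real) \<Rightarrow> nat \<Rightarrow> real" where
  "S_run eps x 0 = 0"
| "S_run eps x (Suc t) = S_run eps x t + (x (Suc t) - (1/2 + eps * sgn (S_run eps x t)))"

definition forecast :: "real \<Rightarrow> (nat \<Rightarrow> real) \<Rightarrow> nat \<Rightarrow> real" where
  "forecast eps x t = 1/2 + eps * sgn (S_run eps x (t - 1))"

end

theory Submission
  imports Defs
begin

text \<open>
  Compare the forecast with the two-level forecast that predicts 1/2 + e on the rounds with
  S_{t-1} \<ge> 0 and 1/2 - e on the others. Moving a few rounds from the upper to the lower level
  balances the outcomes on the upper level, and recalibrating both levels to their empirical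
  means bounds CalDist by 2 + |S_T| + 2e Z + 16e |M| + 16 e^2 T. Here Z counts the rounds with
  S_{t-1} = 0 and M is the martingale of the centred outcomes x_t - 1/2 over the rounds with
  S_{t-1} \<ge> 0.

  For uniformly random outcomes, the drift of size e towards 0 makes E cosh (e S_t) bounded, so
  E |S_T| = O(1/e); each visit to 0 raises E |S| by 1/2 while otherwise it drops by at most e, so
  E Z = O(1/e + e T); and E M^2 \<le> T/4. With e = T^(-1/3) every term is O(T^(1/3)).
\<close>

lemma bits_value: "x \<in> bits T \<Longrightarrow> t \<in> {1..T} \<Longrightarrow> x t = 0 \<or> x t = 1"
  by (auto simp: bits_def PiE_def Pi_def)

lemma finite_bits [simp]: "finite (bits T)"
  by (simp add: bits_def finite_PiE)

lemma card_bits: "card (bits T) = 2 ^ T"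
  unfolding bits_def by (subst card_PiE) (auto simp: numeral_2_eq_2)

lemma sum_bits_const: "(\<Sum>x\<in>bits T. c) = c * 2 ^ T" for c :: real
  by (simp add: card_bits)

section \<open>Recalibrating two-level forecasts\<close>

lemma CalDist_le:
  assumes "q \<in> calib_set T x"
  shows "CalDist T x p \<le> (\<Sum>t\<in>{1..T}. \<bar>p t - q t\<bar>)"
  unfolding CalDist_def
  by (rule cINF_lower[OF _ assms]) (auto intro: bdd_belowI[of _ 0] simp: sum_nonneg)

lemma bits_in_calib_set: "x \<in> bits T \<Longrightarrow> x \<in> calib_set T x"
  unfolding calib_set_def bits_def by (auto simp: PiE_def Pi_def)

definition mean :: "(nat \<Rightarrow> real) \<Rightarrow> nat set \<Rightarrow> real" where
  "mean x G = (\<Sum>t\<in>G. x t) / card G"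

lemma sum_diff_eq_card_mult_mean_diff:
  assumes "finite G"
  shows "(\<Sum>t\<in>G. x t - a) = card G * (mean x G - a)"
  using assms by (cases "card G = 0") (auto simp: mean_def sum_subtractf algebra_simps)

lemma mean_bits_in_unit:
  assumes "x \<in> bits T" "G \<subseteq> {1..T}"
  shows "mean x G \<in> {0..1}"
proof -
  have "\<forall>t\<in>G. 0 \<le> x t \<and> x t \<le> 1" using assms bits_value by fastforce
  then have "0 \<le> (\<Sum>t\<in>G. x t)" "(\<Sum>t\<in>G. x t) \<le> card G"
    using sum_mono[of G x "\<lambda>_. 1"] by (auto intro: sum_nonneg)
  then show ?thesis by (auto simp: mean_def divide_le_eq)
qed

definition two_level :: "nat set \<Rightarrow> real \<Rightarrow> real \<Rightarrow> nat \<Rightarrow> real" where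
  "two_level A a b t = (if t \<in> A then a else b)"

lemma sum_two_level:
  assumes "finite L" "A \<subseteq> L"
  shows "(\<Sum>t\<in>L. f t (two_level A a b t)) = (\<Sum>t\<in>A. f t a) + (\<Sum>t\<in>L - A. f t b)"
proof -
  have "(\<Sum>t\<in>L. f t (two_level A a b t))
      = (\<Sum>t\<in>A. f t (two_level A a b t)) + (\<Sum>t\<in>L - A. f t (two_level A a b t))"
    using sum.subset_diff[OF assms(2,1)] by (simp add: add.commute)
  also have "\<dots> = (\<Sum>t\<in>A. f t a) + (\<Sum>t\<in>L - A. f t b)"
    by (intro arg_cong2[where f = "(+)"] sum.cong) (auto simp: two_level_def)
  finally show ?thesis .
qed

lemma two_level_mean_calibrated:
  assumes x: "x \<in> bits T" and A: "A \<subseteq> {1..T}"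
  shows "restrict (two_level A (mean x A) (mean x ({1..T} - A))) {1..T} \<in> calib_set T x"
proof -
  define mA mB where "mA = mean x A" and "mB = mean x ({1..T} - A)"
  have fA: "finite A" using A finite_subset by blast
  have "(\<Sum>t\<in>{1..T}. (x t - two_level A mA mB t) * of_bool (two_level A mA mB t = \<alpha>)) = 0" for \<alpha>
  proof -
    have "(\<Sum>t\<in>{1..T}. (x t - two_level A mA mB t) * of_bool (two_level A mA mB t = \<alpha>))
        = (\<Sum>t\<in>A. x t - mA) * of_bool (mA = \<alpha>) + (\<Sum>t\<in>{1..T} - A. x t - mB) * of_bool (mB = \<alpha>)"
      by (subst sum_two_level[where f = "\<lambda>t v. (x t - v) * of_bool (v = \<alpha>)", OF _ A])
         (simp_all add: sum_distrib_right)
    also have "\<dots> = 0"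
      using sum_diff_eq_card_mult_mean_diff[OF fA, of x mA]
        sum_diff_eq_card_mult_mean_diff[of "{1..T} - A" x mB]
      by (simp add: mA_def mB_def)
    finally show ?thesis .
  qed
  moreover have "mA \<in> {0..1}" "mB \<in> {0..1}"
    unfolding mA_def mB_def using mean_bits_in_unit[OF x] A by auto
  ultimately show ?thesis
    unfolding mA_def[symmetric] mB_def[symmetric]
    by (auto simp: calib_set_def restrict_PiE_iff two_level_def of_bool_def)
qed

lemma CalDist_le_two_level_discrepancy:
  assumes x: "x \<in> bits T" and A: "A \<subseteq> {1..T}"
  shows "CalDist T x p \<le> (\<Sum>t\<in>{1..T}. \<bar>p t - two_level A a b t\<bar>)
           + \<bar>\<Sum>t\<in>A. x t - a\<bar> + \<bar>\<Sum>t\<in>{1..T} - A. x t - b\<bar>"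
proof -
  define c where "c = two_level A a b"
  define q where "q = restrict (two_level A (mean x A) (mean x ({1..T} - A))) {1..T}"
  have fA: "finite A" using A finite_subset by blast
  have "(\<Sum>t\<in>{1..T}. \<bar>c t - q t\<bar>)
      = (\<Sum>t\<in>{1..T}. two_level A \<bar>a - mean x A\<bar> \<bar>b - mean x ({1..T} - A)\<bar> t)"
    by (intro sum.cong) (auto simp: c_def q_def two_level_def)
  also have "\<dots> = card A * \<bar>a - mean x A\<bar> + card ({1..T} - A) * \<bar>b - mean x ({1..T} - A)\<bar>"
    using sum_two_level[where f = "\<lambda>t v. v", OF _ A] by simp
  also have "\<dots> = \<bar>\<Sum>t\<in>A. x t - a\<bar> + \<bar>\<Sum>t\<in>{1..T} - A. x t - b\<bar>"
    using sum_diff_eq_card_mult_mean_diff[OF fA, of x a]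
      sum_diff_eq_card_mult_mean_diff[of "{1..T} - A" x b]
    by (simp add: abs_mult abs_minus_commute)
  finally have recalibration_cost: "(\<Sum>t\<in>{1..T}. \<bar>c t - q t\<bar>)
      = \<bar>\<Sum>t\<in>A. x t - a\<bar> + \<bar>\<Sum>t\<in>{1..T} - A. x t - b\<bar>" .
  have "CalDist T x p \<le> (\<Sum>t\<in>{1..T}. \<bar>p t - q t\<bar>)"
    unfolding q_def by (rule CalDist_le[OF two_level_mean_calibrated[OF x A]])
  also have "\<dots> \<le> (\<Sum>t\<in>{1..T}. \<bar>p t - c t\<bar>) + (\<Sum>t\<in>{1..T}. \<bar>c t - q t\<bar>)"
    unfolding sum.distrib[symmetric] by (intro sum_mono) linarith
  finally show ?thesis
    using recalibration_cost unfolding c_def by linarith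
qed

lemma exists_remove_sum_decrease:
  fixes f :: "'a \<Rightarrow> real"
  assumes "finite A" and big: "1 < \<bar>\<Sum>t\<in>A. f t\<bar>" and f: "\<forall>t\<in>A. \<delta> \<le> \<bar>f t\<bar> \<and> \<bar>f t\<bar> \<le> 1"
  shows "\<exists>t\<in>A. \<bar>\<Sum>s\<in>A - {t}. f s\<bar> \<le> \<bar>\<Sum>t\<in>A. f t\<bar> - \<delta>"
proof -
  have positive_case: "\<exists>t\<in>A. \<bar>\<Sum>s\<in>A - {t}. g s\<bar> \<le> (\<Sum>t\<in>A. g t) - \<delta>"
    if g_big: "1 < (\<Sum>t\<in>A. g t)" and g: "\<forall>t\<in>A. \<delta> \<le> \<bar>g t\<bar> \<and> \<bar>g t\<bar> \<le> 1"
    for g :: "'a \<Rightarrow> real"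
  proof -
    obtain t where t: "t \<in> A" "0 < g t"
      using g_big sum_nonpos[of A g] by force
    have "(\<Sum>s\<in>A - {t}. g s) = (\<Sum>t\<in>A. g t) - g t"
      using t(1) \<open>finite A\<close> by (simp add: sum_diff1)
    then show ?thesis using t g_big g by (intro bexI[OF _ t(1)]) auto
  qed
  show ?thesis
  proof (cases "0 < (\<Sum>t\<in>A. f t)")
    case True
    then show ?thesis using positive_case[of f] big f by auto
  next
    case False
    then show ?thesis using positive_case[of "\<lambda>t. - f t"] big f by (auto simp: sum_negf)
  qed
qed

text \<open>Greedily discarding terms of the sign of the total until the total is at most 1.\<close>
lemma exists_subset_sum_abs_le_one:
  fixes f :: "'a \<Rightarrow> real"
  assumes "finite A" and f: "\<forall>t\<in>A. \<delta> \<le> \<bar>f t\<bar> \<and> \<bar>f t\<bar> \<le> 1"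
  shows "\<exists>A'\<subseteq>A. \<bar>\<Sum>t\<in>A'. f t\<bar> \<le> 1 \<and> \<delta> * card (A - A') \<le> \<bar>\<Sum>t\<in>A. f t\<bar>"
  using assms
proof (induction "card A" arbitrary: A rule: less_induct)
  case less
  show ?case
  proof (cases "\<bar>\<Sum>t\<in>A. f t\<bar> \<le> 1")
    case True
    then show ?thesis by (intro exI[of _ A]) auto
  next
    case False
    then obtain t where t: "t \<in> A" "\<bar>\<Sum>s\<in>A - {t}. f s\<bar> \<le> \<bar>\<Sum>t\<in>A. f t\<bar> - \<delta>"
      using exists_remove_sum_decrease[OF less.prems(1) _ less.prems(2)] by force
    have "card (A - {t}) < card A" using card_Diff1_less[OF less.prems(1) t(1)] .
    then obtain A' where A': "A' \<subseteq> A - {t}" "\<bar>\<Sum>t\<in>A'. f t\<bar> \<le> 1"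
        "\<delta> * card (A - {t} - A') \<le> \<bar>\<Sum>s\<in>A - {t}. f s\<bar>"
      using less.hyps less.prems by blast
    have "A - A' = insert t (A - {t} - A')" using A'(1) t(1) by blast
    then have "card (A - A') = Suc (card (A - {t} - A'))"
      using less.prems(1) by simp
    then show ?thesis using A' t by (intro exI[of _ A']) (auto simp: algebra_simps)
  qed
qed

lemma CalDist_le_two_level:
  assumes x: "x \<in> bits T" and A: "A \<subseteq> {1..T}" and a: "1/4 \<le> a" "a \<le> 3/4"
  shows "CalDist T x p \<le> 2 + 2 * (\<Sum>t\<in>{1..T}. \<bar>p t - two_level A a b t\<bar>)
           + \<bar>\<Sum>t\<in>{1..T}. x t - p t\<bar> + 8 * \<bar>a - b\<bar> * \<bar>\<Sum>t\<in>A. x t - a\<bar>"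
proof -
  have fA: "finite A" using A finite_subset by blast
  have "\<forall>t\<in>A. 1/4 \<le> \<bar>x t - a\<bar> \<and> \<bar>x t - a\<bar> \<le> 1"
  proof
    fix t assume "t \<in> A"
    then have "x t = 0 \<or> x t = 1" using bits_value[OF x, of t] A by blast
    then show "1/4 \<le> \<bar>x t - a\<bar> \<and> \<bar>x t - a\<bar> \<le> 1" using a by auto
  qed
  from exists_subset_sum_abs_le_one[OF fA this] obtain A' where A': "A' \<subseteq> A"
      "\<bar>\<Sum>t\<in>A'. x t - a\<bar> \<le> 1" and moved: "1/4 * card (A - A') \<le> \<bar>\<Sum>t\<in>A. x t - a\<bar>"
    by blast
  define c c' where "c = two_level A a b" and "c' = two_level A' a b"
  have A'_sub: "A' \<subseteq> {1..T}" using A A' by blast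
  have "(\<Sum>t\<in>{1..T}. \<bar>c t - c' t\<bar>) = (\<Sum>t\<in>{1..T}. two_level (A - A') \<bar>a - b\<bar> 0 t)"
    using A'(1) by (intro sum.cong) (auto simp: c_def c'_def two_level_def)
  also have "\<dots> = card (A - A') * \<bar>a - b\<bar>"
    using sum_two_level[where f = "\<lambda>t v. v", of "{1..T}" "A - A'" "\<bar>a - b\<bar>" 0] A by auto
  finally have cost: "(\<Sum>t\<in>{1..T}. \<bar>p t - c' t\<bar>) \<le> (\<Sum>t\<in>{1..T}. \<bar>p t - c t\<bar>) + card (A - A') * \<bar>a - b\<bar>"
    using sum_mono[of "{1..T}" "\<lambda>t. \<bar>p t - c' t\<bar>" "\<lambda>t. \<bar>p t - c t\<bar> + \<bar>c t - c' t\<bar>"]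
    by (simp add: sum.distrib)
  have moved_cost: "2 * (card (A - A') * \<bar>a - b\<bar>) \<le> 8 * \<bar>a - b\<bar> * \<bar>\<Sum>t\<in>A. x t - a\<bar>"
    using mult_right_mono[OF moved, of "8 * \<bar>a - b\<bar>"] by (simp add: algebra_simps)
  have "(\<Sum>t\<in>{1..T}. x t - c' t) = (\<Sum>t\<in>A'. x t - a) + (\<Sum>t\<in>{1..T} - A'. x t - b)"
    unfolding c'_def by (rule sum_two_level[OF _ A'_sub]) simp
  then have lower_level: "\<bar>\<Sum>t\<in>{1..T} - A'. x t - b\<bar>
      \<le> \<bar>\<Sum>t\<in>{1..T}. x t - p t\<bar> + (\<Sum>t\<in>{1..T}. \<bar>p t - c' t\<bar>) + 1"
    using A'(2) sum_abs[of "\<lambda>t. p t - c' t" "{1..T}"]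
    by (simp add: sum_subtractf)
  have "CalDist T x p \<le> (\<Sum>t\<in>{1..T}. \<bar>p t - c' t\<bar>)
      + \<bar>\<Sum>t\<in>A'. x t - a\<bar> + \<bar>\<Sum>t\<in>{1..T} - A'. x t - b\<bar>"
    unfolding c'_def by (rule CalDist_le_two_level_discrepancy[OF x A'_sub])
  then show ?thesis using cost moved_cost lower_level A'(2) unfolding c_def by linarith
qed

section \<open>The forecaster on a fixed outcome sequence\<close>

lemma S_run_eq_sum: "S_run e x n = (\<Sum>t\<in>{1..n}. x t - forecast e x t)"
  by (induction n) (auto simp: forecast_def)

definition zero_visits :: "real \<Rightarrow> (nat \<Rightarrow> real) \<Rightarrow> nat \<Rightarrow> real" where
  "zero_visits e x n = (\<Sum>i<n. of_bool (S_run e x i = 0))"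

lemma CalDist_forecast_le:
  assumes x: "x \<in> bits T" and e: "0 < e" "e \<le> 1/4"
  shows "CalDist T x (forecast e x) \<le> 2 + \<bar>S_run e x T\<bar> + 2 * e * zero_visits e x T
           + 16 * e * \<bar>\<Sum>i<T. of_bool (0 \<le> S_run e x i) * (x (Suc i) - 1/2)\<bar> + 16 * e\<^sup>2 * T"
proof -
  define A where "A = {1..T} \<inter> {t. 0 \<le> S_run e x (t - 1)}"
  define M where "M = (\<Sum>i<T. of_bool (0 \<le> S_run e x i) * (x (Suc i) - 1/2))"
  have A_sub: "A \<subseteq> {1..T}" by (simp add: A_def)
  have "\<bar>forecast e x t - two_level A (1/2 + e) (1/2 - e) t\<bar> = e * of_bool (S_run e x (t - 1) = 0)"
    if "t \<in> {1..T}" for t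
    using that e by (cases "S_run e x (t - 1)" "0 :: real" rule: linorder_cases)
      (auto simp: forecast_def two_level_def A_def)
  then have gap: "(\<Sum>t\<in>{1..T}. \<bar>forecast e x t - two_level A (1/2 + e) (1/2 - e) t\<bar>)
      = e * zero_visits e x T"
    by (simp add: zero_visits_def sum_distrib_left sum.atLeast1_atMost_eq)
  have "(\<Sum>t\<in>A. x t - 1/2) = (\<Sum>t\<in>{1..T}. of_bool (0 \<le> S_run e x (t - 1)) * (x t - 1/2))"
    unfolding A_def by (rule sum_of_bool_mult_eq[symmetric]) simp
  also have "\<dots> = M"
    by (simp add: M_def sum.atLeast1_atMost_eq)
  finally have "(\<Sum>t\<in>A. x t - (1/2 + e)) = M - e * card A"
    by (simp add: sum_subtractf algebra_simps)
  moreover have "e * card A \<le> e * T"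
    using card_mono[OF _ A_sub] e by (intro mult_left_mono) auto
  moreover have "0 \<le> e * card A" using e by simp
  ultimately have level_excess: "\<bar>\<Sum>t\<in>A. x t - (1/2 + e)\<bar> \<le> \<bar>M\<bar> + e * T"
    by linarith
  have "CalDist T x (forecast e x) \<le> 2 + 2 * (e * zero_visits e x T) + \<bar>S_run e x T\<bar>
      + 8 * (2 * e) * \<bar>\<Sum>t\<in>A. x t - (1/2 + e)\<bar>"
    using CalDist_le_two_level[OF x A_sub, of "1/2 + e" "forecast e x" "1/2 - e"] e
    unfolding gap S_run_eq_sum[symmetric] by simp
  also have "\<dots> \<le> 2 + 2 * (e * zero_visits e x T) + \<bar>S_run e x T\<bar> + 8 * (2 * e) * (\<bar>M\<bar> + e * T)"
    using level_excess e by (intro add_left_mono mult_left_mono) auto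
  finally show ?thesis by (simp add: M_def algebra_simps power2_eq_square)
qed

lemma CalDist_forecast_le_crude:
  assumes x: "x \<in> bits T" and e: "\<bar>e\<bar> \<le> 1"
  shows "CalDist T x (forecast e x) \<le> 3/2 * T"
proof -
  have "CalDist T x (forecast e x) \<le> (\<Sum>t\<in>{1..T}. \<bar>forecast e x t - x t\<bar>)"
    by (rule CalDist_le[OF bits_in_calib_set[OF x]])
  also have "\<dots> \<le> (\<Sum>t\<in>{1..T}. 3/2)"
  proof (intro sum_mono)
    fix t assume "t \<in> {1..T}"
    then have "x t = 0 \<or> x t = 1" by (rule bits_value[OF x])
    moreover have "\<bar>e * sgn (S_run e x (t - 1))\<bar> \<le> 1"
      using e by (simp add: abs_mult abs_sgn_eq)
    ultimately show "\<bar>forecast e x t - x t\<bar> \<le> 3/2"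
      unfolding forecast_def by linarith
  qed
  finally show ?thesis by simp
qed

section \<open>Uniformly random outcomes\<close>

definition flip :: "nat \<Rightarrow> (nat \<Rightarrow> real) \<Rightarrow> nat \<Rightarrow> real" where
  "flip j x = x(j := 1 - x j)"

lemma flip_flip [simp]: "flip j (flip j x) = x"
  by (auto simp: flip_def)

lemma flip_apply_other [simp]: "i \<noteq> j \<Longrightarrow> flip j x i = x i"
  by (simp add: flip_def)

lemma flip_in_bits: "j \<in> {1..T} \<Longrightarrow> x \<in> bits T \<Longrightarrow> flip j x \<in> bits T"
  by (auto simp: bits_def flip_def PiE_def extensional_def Pi_def)

lemma sum_bits_average_bit:
  fixes F :: "(nat \<Rightarrow> real) \<Rightarrow> real \<Rightarrow> real"
  assumes j: "j \<in> {1..T}" and indep: "\<And>x v. x \<in> bits T \<Longrightarrow> F (flip j x) v = F x v"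
  shows "(\<Sum>x\<in>bits T. F x (x j)) = (\<Sum>x\<in>bits T. (F x 0 + F x 1) / 2)"
proof -
  have "(\<Sum>x\<in>bits T. F x (x j)) = (\<Sum>x\<in>bits T. F (flip j x) (flip j x j))"
    by (rule sum.reindex_bij_witness[where i="flip j" and j="flip j"]) (auto simp: flip_in_bits[OF j])
  also have "\<dots> = (\<Sum>x\<in>bits T. F x (1 - x j))"
    by (rule sum.cong) (simp_all add: indep, simp add: flip_def)
  finally have "2 * (\<Sum>x\<in>bits T. F x (x j)) = (\<Sum>x\<in>bits T. F x (x j) + F x (1 - x j))"
    by (simp add: sum.distrib)
  also have "\<dots> = (\<Sum>x\<in>bits T. F x 0 + F x 1)"
    using bits_value[OF _ j] by (intro sum.cong) fastforce+
  finally show ?thesis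
    by (simp add: sum_divide_distrib[symmetric])
qed

lemma S_run_flip: "t < j \<Longrightarrow> S_run e (flip j x) t = S_run e x t"
  by (induction t) (auto simp: flip_def)

lemma sum_bits_S_run_Suc:
  fixes g :: "real \<Rightarrow> real"
  assumes "t < T"
  shows "(\<Sum>x\<in>bits T. g (S_run e x (Suc t))) =
    (\<Sum>x\<in>bits T. (g (S_run e x t - e * sgn (S_run e x t) + 1/2)
                 + g (S_run e x t - e * sgn (S_run e x t) - 1/2)) / 2)"
proof -
  define F where "F x v = g (S_run e x t - e * sgn (S_run e x t) + v - 1/2)" for x v
  have "(\<Sum>x\<in>bits T. g (S_run e x (Suc t))) = (\<Sum>x\<in>bits T. F x (x (Suc t)))"
    by (simp add: F_def algebra_simps)
  also have "\<dots> = (\<Sum>x\<in>bits T. (F x 0 + F x 1) / 2)"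
    using assms by (intro sum_bits_average_bit) (auto simp: F_def S_run_flip)
  finally show ?thesis
    by (simp add: F_def add.commute)
qed

section \<open>A hyperbolic cosine potential\<close>

lemma cosh_le_one_plus_sq:
  fixes z :: real
  assumes "\<bar>z\<bar> \<le> 1"
  shows "cosh z \<le> 1 + z\<^sup>2"
proof -
  define y where "y = \<bar>z\<bar>"
  have y: "0 \<le> y" "y \<le> 1" using assms by (auto simp: y_def)
  have "exp (- y) = inverse (exp y)" by (simp add: exp_minus)
  also have "\<dots> \<le> inverse (1 + y)"
    using y by (intro le_imp_inverse_le) auto
  also have "\<dots> \<le> 1 - y + y\<^sup>2"
  proof -
    have "1 \<le> (1 - y + y\<^sup>2) * (1 + y)"
      using y by (simp add: algebra_simps power2_eq_square power3_eq_cube[symmetric])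
    then show ?thesis using y by (simp add: inverse_eq_divide pos_divide_le_eq)
  qed
  finally have "exp (- y) \<le> 1 - y + y\<^sup>2" .
  moreover have "exp y \<le> 1 + y + y\<^sup>2" by (rule exp_bound[OF y])
  ultimately have "cosh y \<le> 1 + y\<^sup>2" by (simp add: cosh_field_def)
  then show ?thesis by (simp add: y_def)
qed

lemma abs_le_two_cosh: "\<bar>y\<bar> \<le> 2 * cosh (y :: real)"
proof -
  have "\<bar>y\<bar> \<le> exp \<bar>y\<bar>" using exp_ge_add_one_self[of "\<bar>y\<bar>"] by linarith
  also have "\<dots> \<le> 2 * cosh \<bar>y\<bar>" by (simp add: cosh_field_def)
  finally show ?thesis by simp
qed

lemma cosh_le_nine: "\<bar>y\<bar> \<le> 2 \<Longrightarrow> cosh (y :: real) \<le> 9"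
proof -
  assume y: "\<bar>y\<bar> \<le> 2"
  have "exp (2::real) = exp 1 * exp 1" by (simp flip: exp_add)
  also have "\<dots> \<le> 3 * 3" using exp_le by (intro mult_mono) auto
  finally have "exp \<bar>y\<bar> \<le> 9" using y by (smt (verit) exp_le_cancel_iff)
  moreover have "exp (- \<bar>y\<bar>) \<le> 9" by (smt (verit) exp_le_one_iff)
  ultimately have "cosh \<bar>y\<bar> \<le> 9" by (simp add: cosh_field_def)
  then show ?thesis by simp
qed

lemma four_fifths_cosh_le_sinh:
  fixes y :: real
  assumes "2 \<le> y"
  shows "4/5 * cosh y \<le> sinh y"
proof -
  have "3 \<le> exp y" using exp_ge_add_one_self[of y] assms by linarith
  then have "9 \<le> exp y * exp y" using mult_mono[of 3 "exp y" 3 "exp y"] by simp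
  then have "9 * exp (- y) \<le> exp y" by (simp add: exp_minus divide_simps)
  then show ?thesis by (simp add: cosh_field_def sinh_field_def)
qed

lemma cosh_shift_toward_zero:
  fixes e s :: real
  shows "cosh (e * (s - e * sgn s)) \<le> cosh (e * \<bar>s\<bar> - e\<^sup>2)"
proof (cases s "0 :: real" rule: linorder_cases)
  case less
  then have "e * (s - e * sgn s) = - (e * \<bar>s\<bar> - e\<^sup>2)" by (simp add: power2_eq_square algebra_simps)
  then show ?thesis by (metis cosh_minus order_refl)
next
  case equal
  then show ?thesis using cosh_real_ge_1 by simp
next
  case greater
  then show ?thesis by (simp add: power2_eq_square algebra_simps)
qed

lemma cosh_le_one_plus_div_16:
  fixes d :: real
  assumes "0 \<le> d" "d \<le> 1/16"
  shows "cosh d \<le> 1 + d/16"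
proof -
  have "d\<^sup>2 \<le> d/16" using assms mult_left_mono[of d "1/16" d] by (simp add: power2_eq_square)
  then show ?thesis using cosh_le_one_plus_sq[of d] assms by simp
qed

lemma cosh_diff_contract_far:
  fixes y d :: real
  assumes y: "2 \<le> y" and d: "0 \<le> d" "d \<le> 1/16"
  shows "cosh (y - d) * (1 + d/4) \<le> (1 - d/4) * cosh y"
proof -
  have "d \<le> sinh d" using real_le_x_sinh[OF d(1)] by (simp add: sinh_field_def exp_minus)
  then have "4/5 * (cosh y * d) \<le> sinh y * sinh d"
    using four_fifths_cosh_le_sinh[OF y] d y
    by (simp only: mult.assoc[symmetric]) (intro mult_mono, auto)
  moreover have "cosh y * cosh d \<le> cosh y * (1 + d/16)"
    using cosh_le_one_plus_div_16[OF d] by (intro mult_left_mono) auto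
  moreover have "0 \<le> cosh y * d" using d by simp
  ultimately have "cosh (y - d) \<le> (1 - 7/10 * d) * cosh y"
    unfolding cosh_diff by (simp add: algebra_simps)
  then have "cosh (y - d) * (1 + d/4) \<le> (1 - 7/10 * d) * cosh y * (1 + d/4)"
    using d by (intro mult_right_mono) auto
  also have "\<dots> = (1 - 7/10 * d) * (1 + d/4) * cosh y" by (simp only: mult_ac)
  also have "\<dots> \<le> (1 - d/4) * cosh y"
    using d by (intro mult_right_mono) (auto simp: algebra_simps power2_eq_square)
  finally show ?thesis .
qed

lemma cosh_diff_contract_near:
  fixes y d :: real
  assumes y: "0 \<le> y" "y \<le> 2" and d: "0 \<le> d" "d \<le> 1/16"
  shows "cosh (y - d) * (1 + d/4) \<le> (1 - d/4) * cosh y + 8 * d"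
proof -
  have "cosh (y - d) \<le> cosh y * cosh d"
    using y d by (simp add: cosh_diff)
  also have "\<dots> \<le> cosh y * (1 + d/16)"
    using cosh_le_one_plus_div_16[OF d] by (intro mult_left_mono) auto
  finally have "cosh (y - d) * (1 + d/4) \<le> cosh y * (1 + d/16) * (1 + d/4)"
    using d by (intro mult_right_mono) auto
  also have "\<dots> = cosh y * ((1 + d/16) * (1 + d/4))" by (simp only: mult_ac)
  also have "\<dots> \<le> cosh y * (1 + d/2)"
  proof (intro mult_left_mono)
    have "(1 + d/16) * (1 + d/4) = 1 + 5/16 * d + d/64 * d"
      by (simp add: ring_distribs) argo
    also have "\<dots> \<le> 1 + 5/16 * d + 1/64 * d" using d by (intro add_left_mono mult_right_mono) auto
    finally show "(1 + d/16) * (1 + d/4) \<le> 1 + d/2" using d by simp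
  qed simp
  also have "\<dots> = (1 - d/4) * cosh y + 3/4 * d * cosh y" by (simp add: algebra_simps)
  also have "\<dots> \<le> (1 - d/4) * cosh y + 3/4 * d * 9"
    using cosh_le_nine[of y] y d by (intro add_left_mono mult_left_mono) auto
  finally show ?thesis using d by simp
qed

text \<open>The drift of size e towards 0 makes cosh (e S) contract by the factor 1 - e^2/4 once
  e |S| \<ge> 2; below that, cosh (e S) is bounded anyway.\<close>
lemma cosh_drift:
  fixes e s :: real
  assumes e: "0 < e" "e \<le> 1/4"
  shows "(cosh (e * (s - e * sgn s + 1/2)) + cosh (e * (s - e * sgn s - 1/2))) / 2
         \<le> (1 - e\<^sup>2/4) * cosh (e * s) + 8 * e\<^sup>2"
proof -
  define y where "y = e * \<bar>s\<bar>"
  define d where "d = e\<^sup>2"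
  have y: "0 \<le> y" using e by (simp add: y_def)
  have d: "0 \<le> d" "d \<le> 1/16"
    using e power_mono[of e "1/4" 2] by (auto simp: d_def power2_eq_square)
  have avg: "cosh (u + v) + cosh (u - v) = 2 * cosh u * cosh v" for u v :: real
    by (simp add: cosh_add cosh_diff)
  have "e * (s - e * sgn s + 1/2) = e * (s - e * sgn s) + e/2"
       "e * (s - e * sgn s - 1/2) = e * (s - e * sgn s) - e/2"
    by (simp_all add: algebra_simps)
  then have "(cosh (e * (s - e * sgn s + 1/2)) + cosh (e * (s - e * sgn s - 1/2))) / 2
        = cosh (e * (s - e * sgn s)) * cosh (e/2)"
    by (simp add: avg)
  also have "\<dots> \<le> cosh (y - d) * (1 + d/4)"
    using cosh_shift_toward_zero[of e s] cosh_le_one_plus_sq[of "e/2"] e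
    by (intro mult_mono) (auto simp: y_def d_def power_divide)
  also have "\<dots> \<le> (1 - d/4) * cosh y + 8 * d"
    using cosh_diff_contract_far[OF _ d] cosh_diff_contract_near[OF y _ d] d
    by (cases "2 \<le> y") force+
  finally have drift: "(cosh (e * (s - e * sgn s + 1/2)) + cosh (e * (s - e * sgn s - 1/2))) / 2
      \<le> (1 - d/4) * cosh y + 8 * d" .
  have "cosh (e * s) = cosh y"
    using cosh_real_abs[of "e * s"] e by (simp add: y_def abs_mult)
  then show ?thesis using drift by (simp only: d_def)
qed

lemma sum_bits_cosh_S_run_le:
  assumes e: "0 < e" "e \<le> 1/4"
  shows "t \<le> T \<Longrightarrow> (\<Sum>x\<in>bits T. cosh (e * S_run e x t)) \<le> 32 * 2 ^ T"
proof (induction t)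
  case 0
  then show ?case by (simp add: card_bits)
next
  case (Suc t)
  have "(\<Sum>x\<in>bits T. cosh (e * S_run e x (Suc t)))
     = (\<Sum>x\<in>bits T. (cosh (e * (S_run e x t - e * sgn (S_run e x t) + 1/2))
                    + cosh (e * (S_run e x t - e * sgn (S_run e x t) - 1/2))) / 2)"
    using sum_bits_S_run_Suc[of t T "\<lambda>z. cosh (e * z)"] Suc.prems by simp
  also have "\<dots> \<le> (\<Sum>x\<in>bits T. (1 - e\<^sup>2/4) * cosh (e * S_run e x t) + 8 * e\<^sup>2)"
    by (intro sum_mono cosh_drift e)
  also have "\<dots> = (1 - e\<^sup>2/4) * (\<Sum>x\<in>bits T. cosh (e * S_run e x t)) + 8 * e\<^sup>2 * 2 ^ T"
    by (simp add: sum.distrib sum_distrib_left card_bits)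
  also have "\<dots> \<le> (1 - e\<^sup>2/4) * (32 * 2 ^ T) + 8 * e\<^sup>2 * 2 ^ T"
    using Suc e power_mono[of e 1 2] by (intro add_right_mono mult_left_mono) auto
  also have "\<dots> = 32 * 2 ^ T" by (simp add: algebra_simps)
  finally show ?case .
qed

lemma abs_drift_avg_ge:
  fixes e s :: real
  assumes "0 \<le> e"
  shows "\<bar>s\<bar> - e + of_bool (s = 0) / 2 \<le> (\<bar>s - e * sgn s + 1/2\<bar> + \<bar>s - e * sgn s - 1/2\<bar>) / 2"
  using assms by (cases s "0::real" rule: linorder_cases) (auto simp: abs_if)

lemma sum_bits_zero_visits_le:
  assumes e: "0 \<le> e"
  shows "t \<le> T \<Longrightarrow> (\<Sum>x\<in>bits T. zero_visits e x t)
           \<le> 2 * (\<Sum>x\<in>bits T. \<bar>S_run e x t\<bar>) + 2 * e * t * 2 ^ T"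
proof (induction t)
  case 0
  then show ?case by (simp add: zero_visits_def)
next
  case (Suc t)
  have "(\<Sum>x\<in>bits T. \<bar>S_run e x t\<bar> - e + of_bool (S_run e x t = 0) / 2)
     \<le> (\<Sum>x\<in>bits T. (\<bar>S_run e x t - e * sgn (S_run e x t) + 1/2\<bar>
                    + \<bar>S_run e x t - e * sgn (S_run e x t) - 1/2\<bar>) / 2)"
    by (intro sum_mono abs_drift_avg_ge e)
  also have "\<dots> = (\<Sum>x\<in>bits T. \<bar>S_run e x (Suc t)\<bar>)"
    using sum_bits_S_run_Suc[of t T abs] Suc.prems by simp
  finally have "(\<Sum>x\<in>bits T. \<bar>S_run e x t\<bar>) - e * 2 ^ T + (\<Sum>x\<in>bits T. of_bool (S_run e x t = 0)) / 2
      \<le> (\<Sum>x\<in>bits T. \<bar>S_run e x (Suc t)\<bar>)"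
    by (simp only: sum.distrib sum_subtractf sum_divide_distrib sum_bits_const)
  moreover have "(\<Sum>x\<in>bits T. zero_visits e x (Suc t))
      = (\<Sum>x\<in>bits T. zero_visits e x t) + (\<Sum>x\<in>bits T. of_bool (S_run e x t = 0))"
    by (simp only: zero_visits_def sum.lessThan_Suc sum.distrib)
  moreover have "2 * e * real (Suc t) * 2 ^ T = 2 * e * t * 2 ^ T + 2 * e * 2 ^ T"
    by (simp add: algebra_simps)
  ultimately show ?case using Suc.IH Suc.prems by linarith
qed

lemma sum_bits_martingale_transform_sq_le:
  fixes G :: "nat \<Rightarrow> (nat \<Rightarrow> real) \<Rightarrow> real"
  assumes predictable: "\<And>i j x. i < j \<Longrightarrow> G i (flip j x) = G i x"
    and bounded: "\<And>i x. \<bar>G i x\<bar> \<le> 1"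
  shows "k \<le> T \<Longrightarrow> (\<Sum>x\<in>bits T. (\<Sum>i<k. G i x * (x (Suc i) - 1/2))\<^sup>2) \<le> k / 4 * 2 ^ T"
proof (induction k)
  case 0
  then show ?case by simp
next
  case (Suc k)
  define M where "M x = (\<Sum>i<k. G i x * (x (Suc i) - 1/2))" for x
  define F where "F x v = (M x + G k x * (v - 1/2))\<^sup>2" for x v
  have M_flip: "M (flip (Suc k) x) = M x" for x
    unfolding M_def by (intro sum.cong) (auto simp: predictable)
  have "(\<Sum>x\<in>bits T. (\<Sum>i<Suc k. G i x * (x (Suc i) - 1/2))\<^sup>2) = (\<Sum>x\<in>bits T. F x (x (Suc k)))"
    by (simp add: F_def M_def)
  also have "\<dots> = (\<Sum>x\<in>bits T. (F x 0 + F x 1) / 2)"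
    using Suc.prems by (intro sum_bits_average_bit) (auto simp: F_def M_flip predictable)
  also have "\<dots> = (\<Sum>x\<in>bits T. (M x)\<^sup>2 + (G k x)\<^sup>2 / 4)"
    by (intro sum.cong refl) (simp add: F_def power2_eq_square algebra_simps)
  also have "\<dots> \<le> (\<Sum>x\<in>bits T. (M x)\<^sup>2 + 1 / 4)"
    using bounded abs_le_square_iff[of "G k _" 1] by (intro sum_mono) fastforce
  also have "\<dots> \<le> Suc k / 4 * 2 ^ T"
    using Suc by (simp add: M_def sum.distrib card_bits algebra_simps)
  finally show ?case .
qed

section \<open>Expected calibration distance\<close>

lemma sum_bits_abs_S_run_le:
  assumes e: "0 < e" "e \<le> 1/4" and "t \<le> T"
  shows "(\<Sum>x\<in>bits T. \<bar>S_run e x t\<bar>) \<le> 64 / e * 2 ^ T"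
proof -
  have "\<bar>S_run e x t\<bar> \<le> 2 / e * cosh (e * S_run e x t)" for x
    using abs_le_two_cosh[of "e * S_run e x t"] e by (simp add: abs_mult field_simps)
  then have "(\<Sum>x\<in>bits T. \<bar>S_run e x t\<bar>) \<le> 2 / e * (\<Sum>x\<in>bits T. cosh (e * S_run e x t))"
    by (simp add: sum_distrib_left sum_mono)
  also have "\<dots> \<le> 2 / e * (32 * 2 ^ T)"
    using sum_bits_cosh_S_run_le[OF e assms(3)] e by (intro mult_left_mono) auto
  finally show ?thesis by simp
qed

lemma sum_bits_CalDist_forecast_le:
  assumes e: "0 < e" "e \<le> 1/4"
  shows "(\<Sum>x\<in>bits T. CalDist T x (forecast e x)) \<le> (266 + 64 / e + 22 * e\<^sup>2 * T) * 2 ^ T"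
proof -
  define N :: real where "N = 2 ^ T"
  define M where "M x = (\<Sum>i<T. of_bool (0 \<le> S_run e x i) * (x (Suc i) - 1/2))" for x
  have S: "(\<Sum>x\<in>bits T. \<bar>S_run e x T\<bar>) \<le> 64 / e * N"
    using sum_bits_abs_S_run_le[OF e order_refl] by (simp add: N_def)
  have "2 * e * (\<Sum>x\<in>bits T. zero_visits e x T) \<le> 2 * e * (2 * (64 / e * N) + 2 * e * T * N)"
    using sum_bits_zero_visits_le[of e T T] S e by (intro mult_left_mono) (auto simp: N_def)
  also have "\<dots> = 256 * N + 4 * (e\<^sup>2 * T * N)"
    using e by (simp add: algebra_simps power2_eq_square)
  finally have Z: "2 * e * (\<Sum>x\<in>bits T. zero_visits e x T) \<le> 256 * N + 4 * (e\<^sup>2 * T * N)" .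
  have "16 * e * \<bar>M x\<bar> \<le> 8 * (e\<^sup>2 * (M x)\<^sup>2 + 1)" for x
    using sum_squares_ge_zero[of "e * \<bar>M x\<bar> - 1" 0]
    by (simp add: power2_eq_square algebra_simps)
  then have "(\<Sum>x\<in>bits T. 16 * e * \<bar>M x\<bar>) \<le> (\<Sum>x\<in>bits T. 8 * (e\<^sup>2 * (M x)\<^sup>2 + 1))"
    by (rule sum_mono)
  also have "\<dots> = 8 * (e\<^sup>2 * (\<Sum>x\<in>bits T. (M x)\<^sup>2) + N)"
    by (simp add: sum.distrib sum_distrib_left card_bits N_def)
  also have "\<dots> \<le> 8 * (e\<^sup>2 * (T / 4 * N) + N)"
    using sum_bits_martingale_transform_sq_le[of "\<lambda>i x. of_bool (0 \<le> S_run e x i)" T T]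
    by (intro mult_left_mono add_right_mono) (auto simp: M_def N_def S_run_flip)
  finally have M: "(\<Sum>x\<in>bits T. 16 * e * \<bar>M x\<bar>) \<le> 2 * (e\<^sup>2 * T * N) + 8 * N"
    by (simp add: algebra_simps)
  have "(\<Sum>x\<in>bits T. CalDist T x (forecast e x))
      \<le> (\<Sum>x\<in>bits T. 2 + \<bar>S_run e x T\<bar> + 2 * e * zero_visits e x T + 16 * e * \<bar>M x\<bar> + 16 * e\<^sup>2 * T)"
    unfolding M_def by (intro sum_mono CalDist_forecast_le e)
  also have "\<dots> = 2 * N + (\<Sum>x\<in>bits T. \<bar>S_run e x T\<bar>) + 2 * e * (\<Sum>x\<in>bits T. zero_visits e x T)
      + (\<Sum>x\<in>bits T. 16 * e * \<bar>M x\<bar>) + 16 * (e\<^sup>2 * T * N)"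
    by (simp add: sum.distrib sum_distrib_left card_bits N_def algebra_simps)
  also have "\<dots> \<le> 266 * N + 64 / e * N + 22 * (e\<^sup>2 * T * N)"
    using S Z M by linarith
  finally show ?thesis by (simp add: N_def algebra_simps)
qed

lemma sum_bits_CalDist_forecast_le_cube_root:
  assumes c: "1 \<le> c" "c ^ 3 = T"
  shows "(\<Sum>x\<in>bits T. CalDist T x (forecast (1 / c) x)) \<le> 352 * c * 2 ^ T"
proof (cases "c < 4")
  case True
  have "real T = c * c\<^sup>2" using c(2) by (simp add: power2_eq_square power3_eq_cube)
  also have "\<dots> \<le> c * 16" using True c(1) power_mono[of c 4 2] by (intro mult_left_mono) auto
  finally have small: "3/2 * real T \<le> 352 * c" using c(1) by simp
  have "(\<Sum>x\<in>bits T. CalDist T x (forecast (1 / c) x)) \<le> (\<Sum>x\<in>bits T. 3/2 * T)"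
    using c(1) by (intro sum_mono CalDist_forecast_le_crude) auto
  also have "\<dots> = 3/2 * T * 2 ^ T" by (simp add: card_bits)
  also have "\<dots> \<le> 352 * c * 2 ^ T" using small by (intro mult_right_mono) auto
  finally show ?thesis .
next
  case False
  have e2T: "22 * (1 / c)\<^sup>2 * T = 22 * c"
    using c(1) unfolding c(2)[symmetric] by (simp add: power2_eq_square power3_eq_cube)
  have "(\<Sum>x\<in>bits T. CalDist T x (forecast (1 / c) x)) \<le> (266 + 64 * c + 22 * c) * 2 ^ T"
    using sum_bits_CalDist_forecast_le[of "1 / c" T] False c(1) unfolding e2T by simp
  also have "\<dots> \<le> 352 * c * 2 ^ T" using c(1) by (intro mult_right_mono) auto
  finally show ?thesis .
qed

theorem corollary1:
  shows "\<exists>C::real. \<forall>T::nat. T \<ge> 1 \<longrightarrow>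
    (\<Sum>x\<in>bits T. CalDist T x (forecast (real T powr (-1/3)) x)) / 2 ^ T
      \<le> C * real T powr (1/3)"
proof (intro exI[of _ 352] allI impI)
  fix T :: nat
  assume "T \<ge> 1"
  define c where "c = real T powr (1/3)"
  have c: "1 \<le> c" "c ^ 3 = T" "real T powr (-1/3) = 1 / c"
    using \<open>T \<ge> 1\<close> by (auto simp: c_def ge_one_powr_ge_zero powr_minus_divide
        powr_realpow[symmetric] powr_powr)
  then show "(\<Sum>x\<in>bits T. CalDist T x (forecast (real T powr (-1/3)) x)) / 2 ^ T
      \<le> 352 * real T powr (1/3)"
    using sum_bits_CalDist_forecast_le_cube_root[OF c(1,2)]
    unfolding c(3) c_def[symmetric] by (simp add: divide_le_eq)
qed

end
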